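(* Let $(X,d)$ be a $\delta$-Gromov hyperbolic space, $p\in X$, $\epsilon>0$, and $X^\epsilon=(X,d_\epsilon)$ the uniformized space with base point $p$. If the Gehring-Hayman property for metric boundary points holds for $X^\epsilon$, then the canonical boundary map $\Phi:\partial_GX\to\partial_{d_\epsilon}X^\epsilon$ is bijective.
   Context: Gromov product $(x|y)_p=\frac12(d(p,x)+d(p,y)-d(x,y))$. $\delta$-Gromov hyperbolic: unbounded, proper, geodesic, and $(x|z)_p\ge\min\{(x|y)_p,(y|z)_p\}-\delta$ for all $x,y,z,p$. Uniformized metric: $d_\epsilon(x,y)=\inf_\gamma\int_\gamma e^{-\epsilon d(p,z)}ds(z)$ over $d$-rectifiable curves; $l_{d_\epsilon}$ is $d_\epsilon$-length; $\partial_{d_\epsilon}X^\epsilon=\overline{X^\epsilon}\setminus X^\epsilon$ (closure in the completion); $[x,y]$ a $d$-geodesic. $\partial_GX$ is the set of geodesic rays from $p$ modulo $\gamma\sim\tilde\gamma$ iff $\sup_t d(\gamma(t),\tilde\gamma(t))<\infty$; $\Phi([\gamma])=\lim_{k\to\infty}\gamma(k)$ in $d_\epsilon$ (well defined). GH property for metric boundary points: for every $x\in\partial_{d_\epsilon}X^\epsilon$ and every $(x_n)\subseteq X$ with $d_\epsilon(x_n,x)\to0$ there is $C\ge1$ with $l_{d_\epsilon}([x_n,x_m])\le Cd_\epsilon(x_n,x_m)$ for all $n,m$. *)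

theory Defs
  imports "HOL-Analysis.Analysis"
begin

text \<open>The space X is the whole carrier of a metric space type; d = dist.\<close>

definition gromov_prod :: "'a::metric_space \<Rightarrow> 'a \<Rightarrow> 'a \<Rightarrow> real" where
  "gromov_prod p x y = (dist p x + dist p y - dist x y) / 2"

definition geodesic_seg :: "(real \<Rightarrow> 'a::metric_space) \<Rightarrow> 'a \<Rightarrow> 'a \<Rightarrow> bool" where
  "geodesic_seg \<gamma> x y \<longleftrightarrow> \<gamma> 0 = x \<and> \<gamma> (dist x y) = y \<and>
     (\<forall>s\<in>{0..dist x y}. \<forall>t\<in>{0..dist x y}. dist (\<gamma> s) (\<gamma> t) = \<bar>s - t\<bar>)"

definition geodesic_space :: "'a::metric_space itself \<Rightarrow> bool" where
  "geodesic_space _ \<longleftrightarrow> (\<forall>x y::'a. \<exists>\<gamma>. geodesic_seg \<gamma> x y)"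

definition proper_space :: "'a::metric_space itself \<Rightarrow> bool" where
  "proper_space _ \<longleftrightarrow> (\<forall>(x::'a) r. compact (cball x r))"

definition gromov_hyperbolic :: "'a::metric_space itself \<Rightarrow> real \<Rightarrow> bool" where
  "gromov_hyperbolic T \<delta> \<longleftrightarrow> \<not> bounded (UNIV :: 'a set) \<and> proper_space T \<and> geodesic_space T \<and>
     (\<forall>x y z p :: 'a. gromov_prod p x z \<ge> min (gromov_prod p x y) (gromov_prod p y z) - \<delta>)"

definition length_wrt :: "('a \<Rightarrow> 'a \<Rightarrow> real) \<Rightarrow> (real \<Rightarrow> 'a) \<Rightarrow> real \<Rightarrow> real \<Rightarrow> ereal" where
  "length_wrt D \<gamma> a b = (SUP ts \<in> {ts. sorted ts \<and> set ts \<subseteq> {a..b}}.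
      ereal (\<Sum>i < length ts - 1. D (\<gamma> (ts ! i)) (\<gamma> (ts ! Suc i))))"

definition rectifiable_curve :: "(real \<Rightarrow> 'a::metric_space) \<Rightarrow> bool" where
  "rectifiable_curve \<gamma> \<longleftrightarrow> continuous_on {0..1} \<gamma> \<and> length_wrt dist \<gamma> 0 1 < \<infinity>"

definition arclen :: "(real \<Rightarrow> 'a::metric_space) \<Rightarrow> real \<Rightarrow> real" where
  "arclen \<gamma> t = real_of_ereal (length_wrt dist \<gamma> 0 t)"

definition arc_param :: "(real \<Rightarrow> 'a::metric_space) \<Rightarrow> real \<Rightarrow> 'a" where
  "arc_param \<gamma> s = \<gamma> (SOME t. t \<in> {0..1} \<and> arclen \<gamma> t = s)"

definition line_integral :: "('a::metric_space \<Rightarrow> real) \<Rightarrow> (real \<Rightarrow> 'a) \<Rightarrow> real" where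
  "line_integral \<rho> \<gamma> = integral {0..arclen \<gamma> 1} (\<lambda>s. \<rho> (arc_param \<gamma> s))"

definition unif_dist :: "real \<Rightarrow> 'a::metric_space \<Rightarrow> 'a \<Rightarrow> 'a \<Rightarrow> real" where
  "unif_dist \<epsilon> p x y = (INF \<gamma> \<in> {\<gamma>. rectifiable_curve \<gamma> \<and> \<gamma> 0 = x \<and> \<gamma> 1 = y}.
      line_integral (\<lambda>z. exp (- \<epsilon> * dist p z)) \<gamma>)"

definition geodesic_ray :: "'a::metric_space \<Rightarrow> (real \<Rightarrow> 'a) \<Rightarrow> bool" where
  "geodesic_ray p \<gamma> \<longleftrightarrow> \<gamma> 0 = p \<and> (\<forall>s\<ge>0. \<forall>t\<ge>0. dist (\<gamma> s) (\<gamma> t) = \<bar>s - t\<bar>)"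

definition ray_equiv :: "'a::metric_space \<Rightarrow> ((real \<Rightarrow> 'a) \<times> (real \<Rightarrow> 'a)) set" where
  "ray_equiv p = {(\<gamma>, \<gamma>'). geodesic_ray p \<gamma> \<and> geodesic_ray p \<gamma>' \<and>
      (\<exists>B. \<forall>t\<ge>0. dist (\<gamma> t) (\<gamma>' t) \<le> B)}"

definition gromov_boundary :: "'a::metric_space \<Rightarrow> (real \<Rightarrow> 'a) set set" where
  "gromov_boundary p = {\<gamma>. geodesic_ray p \<gamma>} // ray_equiv p"

text \<open>The metric boundary of X^eps: given an isometric embedding \<iota> of (X, d_eps) into a
  complete metric space (e.g. the completion), the closure of the image minus the image.\<close>
definition metric_boundary :: "('a \<Rightarrow> 'b::metric_space) \<Rightarrow> 'b set" where
  "metric_boundary \<iota> = closure (range \<iota>) - range \<iota>"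

definition Phi_map :: "('a \<Rightarrow> 'b::metric_space) \<Rightarrow> (real \<Rightarrow> 'a) set \<Rightarrow> 'b" where
  "Phi_map \<iota> C = lim (\<lambda>k::nat. \<iota> ((SOME \<gamma>. \<gamma> \<in> C) (real k)))"

definition GH_property :: "real \<Rightarrow> 'a::metric_space \<Rightarrow> ('a \<Rightarrow> 'b::metric_space) \<Rightarrow> bool" where
  "GH_property \<epsilon> p \<iota> \<longleftrightarrow> (\<forall>x \<in> metric_boundary \<iota>. \<forall>xs :: nat \<Rightarrow> 'a.
     (\<lambda>n. \<iota> (xs n)) \<longlonglongrightarrow> x \<longrightarrow>
     (\<exists>C\<ge>1. \<forall>n m. \<forall>\<gamma>. geodesic_seg \<gamma> (xs n) (xs m) \<longrightarrow>
        length_wrt (unif_dist \<epsilon> p) \<gamma> 0 (dist (xs n) (xs m)) \<le> ereal (C * unif_dist \<epsilon> p (xs n) (xs m))))"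

end

theory Submission
  imports Defs "HOL-Probability.Characteristic_Functions"
begin

text \<open>Along a geodesic ray \<open>\<gamma>\<close> from \<open>p\<close> the uniformized distance satisfies
  \<open>d\<^sub>\<epsilon>(\<gamma> s, \<gamma> t) \<le> exp (-\<epsilon> s) / \<epsilon>\<close> for \<open>s \<le> t\<close>, so \<open>\<gamma>(k)\<close> converges in the completion,
  and rays at bounded distance have the same limit. The lower bound
  \<open>d\<^sub>\<epsilon>(x, y) \<ge> exp (-\<epsilon> (d(p, x) + 1)) min 1 (d(x, y))\<close> keeps this limit away from every point
  of \<open>X\<close>, so \<open>\<Phi>\<close> lands in the metric boundary. Conversely, points \<open>x\<^sub>n\<close> tending to a boundary
  point leave every ball, since \<open>X\<close> is proper and \<open>d\<^sub>\<epsilon> \<le> d\<close>; a pointwise cluster point of the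
  geodesics \<open>[p, x\<^sub>n]\<close> is a ray converging to that boundary point, which gives surjectivity.
  Injectivity is where the Gehring--Hayman property enters.\<close>

section \<open>Length of curves\<close>

fun polygonal_length :: "('a \<Rightarrow> 'a \<Rightarrow> real) \<Rightarrow> (real \<Rightarrow> 'a) \<Rightarrow> real list \<Rightarrow> real" where
  "polygonal_length D g [] = 0"
| "polygonal_length D g [t] = 0"
| "polygonal_length D g (s # t # ts) = D (g s) (g t) + polygonal_length D g (t # ts)"

lemma polygonal_length_eq_sum:
  "polygonal_length D g ts = (\<Sum>i < length ts - 1. D (g (ts ! i)) (g (ts ! Suc i)))"
proof (induction D g ts rule: polygonal_length.induct)
  case (3 D g s t ts)
  have "(\<Sum>i < length (s # t # ts) - 1. D (g ((s # t # ts) ! i)) (g ((s # t # ts) ! Suc i)))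
      = D (g s) (g t) + (\<Sum>i < length (t # ts) - 1. D (g ((t # ts) ! i)) (g ((t # ts) ! Suc i)))"
    by (simp add: sum.lessThan_Suc_shift del: sum.lessThan_Suc)
  then show ?case using 3 by simp
qed auto

lemma length_wrt_eq_SUP_polygonal_length:
  "length_wrt D g a b = (SUP ts \<in> {ts. sorted ts \<and> set ts \<subseteq> {a..b}}. ereal (polygonal_length D g ts))"
  unfolding length_wrt_def polygonal_length_eq_sum ..

lemma polygonal_length_le_length_wrt:
  "sorted ts \<Longrightarrow> set ts \<subseteq> {a..b} \<Longrightarrow> ereal (polygonal_length D g ts) \<le> length_wrt D g a b"
  unfolding length_wrt_eq_SUP_polygonal_length by (rule SUP_upper) auto

lemma chord_le_length_wrt:
  "a \<le> u \<Longrightarrow> u \<le> v \<Longrightarrow> v \<le> b \<Longrightarrow> ereal (D (g u) (g v)) \<le> length_wrt D g a b"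
  using polygonal_length_le_length_wrt[of "[u, v]" a b D g] by simp

lemma length_wrt_nonneg: "0 \<le> length_wrt D g a b"
  using polygonal_length_le_length_wrt[of "[]" a b D g] by (simp add: zero_ereal_def)

lemma length_wrt_mono: "a' \<le> a \<Longrightarrow> b \<le> b' \<Longrightarrow> length_wrt D g a b \<le> length_wrt D g a' b'"
  unfolding length_wrt_eq_SUP_polygonal_length by (rule SUP_subset_mono) auto

lemma polygonal_length_append_ge:
  assumes "\<And>x y. 0 \<le> D x y"
  shows "polygonal_length D g xs + polygonal_length D g ys \<le> polygonal_length D g (xs @ ys)"
proof (induction xs rule: induct_list012)
  case (2 x)
  then show ?case using assms by (cases ys) simp_all
qed simp_all

lemma polygonal_length_append_le:
  "polygonal_length dist g (xs @ ys) \<le> polygonal_length dist g (xs @ [b]) + polygonal_length dist g (b # ys)"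
proof (induction xs rule: induct_list012)
  case 1
  then show ?case by (cases ys) simp_all
next
  case (2 x)
  then show ?case using dist_triangle[of "g x" _ "g b"] by (cases ys) simp_all
qed simp

lemma polygonal_length_const: "\<forall>u\<in>set ts. u = c \<Longrightarrow> polygonal_length dist g ts = 0"
  by (induction ts rule: induct_list012) auto

lemma polygonal_length_map: "polygonal_length D g (map f ts) = polygonal_length D (g \<circ> f) ts"
  by (induction D "g \<circ> f" ts rule: polygonal_length.induct) auto

lemma polygonal_length_snoc:
  "polygonal_length D g (ts @ [t]) =
     polygonal_length D g ts + (if ts = [] then 0 else D (g (last ts)) (g t))"
  by (induction D g ts rule: polygonal_length.induct) auto

lemma polygonal_length_rev: "polygonal_length dist g (rev ts) = polygonal_length dist g ts"
proof (induction ts rule: induct_list012)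
  case (3 s t ts)
  have "polygonal_length dist g (rev (s # t # ts)) = polygonal_length dist g (rev (t # ts)) + dist (g t) (g s)"
    using polygonal_length_snoc[of dist g "rev (t # ts)" s] by (simp add: last_rev)
  then show ?case using 3 by (simp add: dist_commute)
qed auto

lemma polygonal_length_max_ge:
  fixes g :: "real \<Rightarrow> 'a::metric_space"
  assumes "sorted ts" "\<forall>u\<in>set ts. u = t0 \<or> t' \<le> u" "t0 \<le> t'"
  shows "polygonal_length dist g ts - dist (g t0) (g t') \<le> polygonal_length dist g (map (max t') ts)"
  using assms
proof (induction ts rule: induct_list012)
  case (3 x y zs)
  have id: "map (max t') us = us" if "\<forall>u\<in>set us. t' \<le> u" for us
    using that by (induction us) auto
  consider "t' \<le> x" | "x = t0" "x < t'" "t' \<le> y" | "x = t0" "y = t0" "x < t'"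
    using "3.prems"(2,3) by force
  then show ?case
  proof cases
    case 1
    then show ?thesis using "3.prems" id[of "x # y # zs"] by force
  next
    case 2
    then have "map (max t') (x # y # zs) = t' # y # zs" using "3.prems" id[of "y # zs"] by force
    then show ?thesis using 2 dist_triangle[of "g t0" "g y" "g t'"] by simp
  next
    case 3
    then show ?thesis using "3.IH"(2) "3.prems" by simp
  qed
qed simp_all

text \<open>Only meaningful for curves of finite length: \<open>real_of_ereal \<infinity> = 0\<close>.\<close>

definition curve_length :: "(real \<Rightarrow> 'a::metric_space) \<Rightarrow> real \<Rightarrow> real \<Rightarrow> real" where
  "curve_length g a b = real_of_ereal (length_wrt dist g a b)"

lemma curve_length_nonneg: "0 \<le> curve_length g a b"
  unfolding curve_length_def using length_wrt_nonneg[of dist g a b] by (simp add: real_of_ereal_pos)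

lemma length_wrt_eq_curve_length:
  "length_wrt dist g a b < \<infinity> \<Longrightarrow> length_wrt dist g a b = ereal (curve_length g a b)"
  using length_wrt_nonneg[of dist g a b] unfolding curve_length_def
  by (cases "length_wrt dist g a b") auto

lemma length_wrt_finite_subinterval:
  "length_wrt dist g a' b' < \<infinity> \<Longrightarrow> a' \<le> a \<Longrightarrow> b \<le> b' \<Longrightarrow> length_wrt dist g a b < \<infinity>"
  using length_wrt_mono[of a' a b b' dist g] by (meson order.strict_trans1)

lemma polygonal_length_le_curve_length:
  assumes "length_wrt dist g a b < \<infinity>" "sorted ts" "set ts \<subseteq> {a..b}"
  shows "polygonal_length dist g ts \<le> curve_length g a b"
  using polygonal_length_le_length_wrt[OF assms(2,3), of dist g] length_wrt_eq_curve_length[OF assms(1)]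
  by simp

lemma curve_length_le:
  assumes "length_wrt dist g a b < \<infinity>"
    and "\<And>ts. sorted ts \<Longrightarrow> set ts \<subseteq> {a..b} \<Longrightarrow> polygonal_length dist g ts \<le> M"
  shows "curve_length g a b \<le> M"
proof -
  have "length_wrt dist g a b \<le> ereal M"
    unfolding length_wrt_eq_SUP_polygonal_length by (rule SUP_least) (use assms(2) in auto)
  then show ?thesis using length_wrt_eq_curve_length[OF assms(1)] by simp
qed

lemma chord_le_curve_length:
  assumes "length_wrt dist g a b < \<infinity>" "a \<le> u" "u \<le> v" "v \<le> b"
  shows "dist (g u) (g v) \<le> curve_length g a b"
  using polygonal_length_le_curve_length[OF assms(1), of "[u, v]"] assms by simp

lemma curve_length_superadditive:
  assumes fin: "length_wrt dist g a c < \<infinity>" and "a \<le> b" "b \<le> c"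
  shows "curve_length g a b + curve_length g b c \<le> curve_length g a c"
proof -
  have fin_ab: "length_wrt dist g a b < \<infinity>" and fin_bc: "length_wrt dist g b c < \<infinity>"
    using length_wrt_finite_subinterval[OF fin] assms by auto
  have concat: "polygonal_length dist g xs + polygonal_length dist g ys \<le> curve_length g a c"
    if "sorted xs" "set xs \<subseteq> {a..b}" "sorted ys" "set ys \<subseteq> {b..c}" for xs ys
  proof -
    have "sorted (xs @ ys)" using that by (force simp: sorted_append subset_iff intro: order_trans)
    moreover have "set (xs @ ys) \<subseteq> {a..c}" using that assms by auto
    ultimately have "polygonal_length dist g (xs @ ys) \<le> curve_length g a c"
      using polygonal_length_le_curve_length[OF fin] by blast
    then show ?thesis using polygonal_length_append_ge[of dist g xs ys] by simp
  qed
  have "polygonal_length dist g ys \<le> curve_length g a c - curve_length g a b"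
    if "sorted ys" "set ys \<subseteq> {b..c}" for ys
  proof -
    have "curve_length g a b \<le> curve_length g a c - polygonal_length dist g ys"
      by (rule curve_length_le[OF fin_ab]) (use concat that in force)
    then show ?thesis by simp
  qed
  then have "curve_length g b c \<le> curve_length g a c - curve_length g a b"
    by (rule curve_length_le[OF fin_bc])
  then show ?thesis by simp
qed

lemma sorted_dropWhile_gt:
  "sorted ts \<Longrightarrow> u \<in> set (dropWhile (\<lambda>x. x \<le> b) ts) \<Longrightarrow> (b::real) < u"
proof (induction ts)
  case (Cons x r)
  then show ?case by (cases "x \<le> b") auto
qed simp

lemma curve_length_subadditive:
  assumes fin: "length_wrt dist g a c < \<infinity>" and "a \<le> b" "b \<le> c"
  shows "curve_length g a c \<le> curve_length g a b + curve_length g b c"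
proof (rule curve_length_le[OF fin])
  fix ts :: "real list" assume ts: "sorted ts" "set ts \<subseteq> {a..c}"
  have fin_ab: "length_wrt dist g a b < \<infinity>" and fin_bc: "length_wrt dist g b c < \<infinity>"
    using length_wrt_finite_subinterval[OF fin] assms by auto
  define xs where "xs = takeWhile (\<lambda>x. x \<le> b) ts"
  define ys where "ys = dropWhile (\<lambda>x. x \<le> b) ts"
  have ys_gt: "b < u" "u \<in> set ts" if "u \<in> set ys" for u
    using that sorted_dropWhile_gt[OF ts(1)] unfolding ys_def by (auto dest: set_dropWhileD)
  have "sorted (xs @ [b])"
    using ts unfolding xs_def by (auto simp: sorted_append dest: set_takeWhileD intro: sorted_takeWhile)
  moreover have "set (xs @ [b]) \<subseteq> {a..b}"
    using ts assms unfolding xs_def by (force dest: set_takeWhileD)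
  ultimately have left: "polygonal_length dist g (xs @ [b]) \<le> curve_length g a b"
    using polygonal_length_le_curve_length[OF fin_ab] by blast
  have "sorted (b # ys)"
    using ts(1) ys_gt(1) sorted_dropWhile[OF ts(1)] unfolding ys_def by (auto intro: less_imp_le)
  moreover have "set (b # ys) \<subseteq> {b..c}"
    using ts(2) ys_gt assms by fastforce
  ultimately have right: "polygonal_length dist g (b # ys) \<le> curve_length g b c"
    using polygonal_length_le_curve_length[OF fin_bc] by blast
  have "ts = xs @ ys" unfolding xs_def ys_def by simp
  then show "polygonal_length dist g ts \<le> curve_length g a b + curve_length g b c"
    using polygonal_length_append_le[of g xs ys b] left right by simp
qed

lemma curve_length_additive:
  assumes "length_wrt dist g a c < \<infinity>" "a \<le> b" "b \<le> c"
  shows "curve_length g a c = curve_length g a b + curve_length g b c"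
  using curve_length_subadditive[OF assms] curve_length_superadditive[OF assms] by simp

lemma curve_length_refl: "length_wrt dist g a a < \<infinity> \<Longrightarrow> curve_length g a a = 0"
  using curve_length_superadditive[of g a a a] curve_length_nonneg[of g a a] by simp

lemma curve_length_mono_right:
  "length_wrt dist g a c < \<infinity> \<Longrightarrow> a \<le> b \<Longrightarrow> b \<le> c \<Longrightarrow> curve_length g a b \<le> curve_length g a c"
  using curve_length_superadditive[of g a c b] curve_length_nonneg[of g b c] by simp

text \<open>Take a partition that is \<open>e/4\<close>-close to the length and push its points up to a parameter
  \<open>t'\<close> so close to \<open>t0\<close> that \<open>d(g t0, g t') < e/4\<close>.\<close>

lemma curve_length_cut_initial_piece:
  fixes g :: "real \<Rightarrow> 'a::metric_space"
  assumes cont: "continuous_on {a..b} g" and fin: "length_wrt dist g a b < \<infinity>"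
    and t: "a \<le> t0" "t0 < t1" "t1 \<le> b" and e: "0 < e" "e \<le> curve_length g t0 t1"
  shows "\<exists>t'. t0 < t' \<and> t' \<le> t1 \<and> curve_length g t0 t' + e / 2 \<le> curve_length g t0 t1"
proof -
  have fin1: "length_wrt dist g t0 t1 < \<infinity>" using length_wrt_finite_subinterval[OF fin] t by auto
  obtain ts where ts: "sorted ts" "set ts \<subseteq> {t0..t1}" "3 * e / 4 < polygonal_length dist g ts"
    using curve_length_le[OF fin1, of "3 * e / 4"] e by force
  have "t0 \<in> {a..b}" using t by auto
  then obtain d where d: "d > 0" "\<And>u. u \<in> {a..b} \<Longrightarrow> dist u t0 < d \<Longrightarrow> dist (g u) (g t0) < e / 4"
    using cont e(1) unfolding continuous_on_iff by (metis zero_less_divide_iff zero_less_numeral)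
  define Pos where "Pos = {u \<in> set ts. t0 < u}"
  have "Pos \<noteq> {}"
  proof
    assume "Pos = {}"
    then have "\<forall>u\<in>set ts. u = t0" using ts(2) unfolding Pos_def by force
    then have "polygonal_length dist g ts = 0" by (rule polygonal_length_const)
    with ts e show False by simp
  qed
  moreover have "finite Pos" unfolding Pos_def by simp
  ultimately have "Min Pos \<in> Pos" "\<forall>u\<in>Pos. Min Pos \<le> u" by simp_all
  then have m: "t0 < Min Pos" "Min Pos \<le> t1" "\<forall>u\<in>set ts. u = t0 \<or> Min Pos \<le> u"
    using ts(2) unfolding Pos_def by (force, force, fastforce)
  define t' where "t' = min (Min Pos) (t0 + d / 2)"
  have t': "t0 < t'" "t' \<le> t1" "\<forall>u\<in>set ts. u = t0 \<or> t' \<le> u"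
    using m d unfolding t'_def by auto
  have "dist (g t') (g t0) < e / 4"
    using d(2)[of t'] t' t d(1) unfolding t'_def by (auto simp: dist_real_def)
  moreover have "polygonal_length dist g ts - dist (g t0) (g t') \<le> polygonal_length dist g (map (max t') ts)"
    by (rule polygonal_length_max_ge[OF ts(1) t'(3)]) (use t' in auto)
  moreover have "sorted (map (max t') ts)" unfolding sorted_map
    by (rule sorted_wrt_mono_rel[OF _ ts(1)]) (auto simp: max_def)
  then have "polygonal_length dist g (map (max t') ts) \<le> curve_length g t' t1"
    using ts(2) t' length_wrt_finite_subinterval[OF fin1, of t' t1]
    by (intro polygonal_length_le_curve_length) auto
  moreover have "curve_length g t0 t' + curve_length g t' t1 \<le> curve_length g t0 t1"
    using curve_length_superadditive[OF fin1] t' by auto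
  ultimately show ?thesis using ts(3) t' by (intro exI[of _ t']) (simp add: dist_commute)
qed

lemma curve_length_short_initial_piece:
  fixes g :: "real \<Rightarrow> 'a::metric_space"
  assumes cont: "continuous_on {a..b} g" and fin: "length_wrt dist g a b < \<infinity>"
    and t0: "a \<le> t0" "t0 < b" and e: "e > 0"
  shows "\<exists>t'. t0 < t' \<and> t' \<le> b \<and> curve_length g t0 t' < e"
proof (rule ccontr)
  assume "\<nexists>t'. t0 < t' \<and> t' \<le> b \<and> curve_length g t0 t' < e"
  then have long: "e \<le> curve_length g t0 t'" if "t0 < t'" "t' \<le> b" for t'
    using that by (auto simp: not_less)
  have "real k * (e / 2) \<le> curve_length g t0 t" if "t0 < t" "t \<le> b" for k :: nat and t
    using that
  proof (induction k arbitrary: t)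
    case 0
    then show ?case by (simp add: curve_length_nonneg)
  next
    case (Suc k)
    obtain t' where "t0 < t'" "t' \<le> t" "curve_length g t0 t' + e / 2 \<le> curve_length g t0 t"
      using curve_length_cut_initial_piece[OF cont fin t0(1) Suc.prems e long] Suc.prems by blast
    with Suc.IH[of t'] Suc.prems show ?case by (simp add: algebra_simps)
  qed
  moreover obtain k :: nat where "curve_length g t0 b < real k * (e / 2)"
    using reals_Archimedean3[of "e / 2"] e by (metis half_gt_zero)
  ultimately have "real k * (e / 2) \<le> curve_length g t0 b" "curve_length g t0 b < real k * (e / 2)"
    using t0 by auto
  then show False by simp
qed

lemma curve_length_right_small:
  fixes g :: "real \<Rightarrow> 'a::metric_space"
  assumes cont: "continuous_on {a..b} g" and fin: "length_wrt dist g a b < \<infinity>"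
    and t0: "a \<le> t0" "t0 \<le> b" and e: "e > 0"
  shows "\<exists>d>0. \<forall>t. t0 \<le> t \<longrightarrow> t < t0 + d \<longrightarrow> t \<le> b \<longrightarrow> curve_length g t0 t < e"
proof (cases "t0 < b")
  case True
  then obtain t' where t': "t0 < t'" "t' \<le> b" "curve_length g t0 t' < e"
    using curve_length_short_initial_piece[OF cont fin t0(1) _ e] by blast
  have "curve_length g t0 t \<le> curve_length g t0 t'" if "t0 \<le> t" "t < t'" for t
    using that t' t0 length_wrt_finite_subinterval[OF fin, of t0 t']
    by (intro curve_length_mono_right) auto
  with t' show ?thesis by (intro exI[of _ "t' - t0"]) force
next
  case False
  then have "curve_length g t0 t < e" if "t0 \<le> t" "t \<le> b" for t
  proof -
    have "t = t0" using that False t0 by simp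
    then show ?thesis using curve_length_refl[of g t0] length_wrt_finite_subinterval[OF fin, of t0 t0] t0 e
      by simp
  qed
  then show ?thesis by (intro exI[of _ 1]) auto
qed

lemma length_wrt_reflect:
  "length_wrt dist (\<lambda>t. g (- t)) (- b) (- a) = length_wrt dist g a b"
proof -
  define h where "h = (\<lambda>ts::real list. rev (map uminus ts))"
  have "{ts. sorted ts \<and> set ts \<subseteq> {- b..- a}} = h ` {ts. sorted ts \<and> set ts \<subseteq> {a..b}}"
  proof (rule set_eqI, rule iffI)
    fix ts assume "ts \<in> {ts. sorted ts \<and> set ts \<subseteq> {- b..- a}}"
    then have "h ts \<in> {ts. sorted ts \<and> set ts \<subseteq> {a..b}}" and "ts = h (h ts)"
      unfolding h_def by (auto simp: sorted_wrt_rev sorted_wrt_map rev_map)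
    then show "ts \<in> h ` {ts. sorted ts \<and> set ts \<subseteq> {a..b}}" by blast
  qed (auto simp: h_def sorted_wrt_rev sorted_wrt_map subset_iff)
  moreover have "polygonal_length dist (\<lambda>t. g (- t)) (h ts) = polygonal_length dist g ts" for ts
    unfolding h_def polygonal_length_rev polygonal_length_map by (simp add: comp_def)
  ultimately show ?thesis
    unfolding length_wrt_eq_SUP_polygonal_length by (simp add: image_image)
qed

lemma curve_length_reflect: "curve_length (\<lambda>t. g (- t)) (- b) (- a) = curve_length g a b"
  unfolding curve_length_def length_wrt_reflect ..

lemma curve_length_left_small:
  fixes g :: "real \<Rightarrow> 'a::metric_space"
  assumes cont: "continuous_on {a..b} g" and fin: "length_wrt dist g a b < \<infinity>"
    and t0: "a \<le> t0" "t0 \<le> b" and e: "e > 0"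
  shows "\<exists>d>0. \<forall>t. t \<le> t0 \<longrightarrow> t0 - d < t \<longrightarrow> a \<le> t \<longrightarrow> curve_length g t t0 < e"
proof -
  have "continuous_on {- b..- a} (\<lambda>t. g (- t))"
    by (rule continuous_on_compose2[OF cont]) (auto intro: continuous_intros)
  moreover have "length_wrt dist (\<lambda>t. g (- t)) (- b) (- a) < \<infinity>"
    using fin by (simp add: length_wrt_reflect)
  ultimately obtain d where "d > 0"
    and d: "\<And>t. - t0 \<le> t \<Longrightarrow> t < - t0 + d \<Longrightarrow> t \<le> - a \<Longrightarrow> curve_length (\<lambda>t. g (- t)) (- t0) t < e"
    using curve_length_right_small[of "- b" "- a" "\<lambda>t. g (- t)" "- t0" e] t0 e by auto
  have "curve_length g t t0 < e" if "t \<le> t0" "t0 - d < t" "a \<le> t" for t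
    using d[of "- t"] that curve_length_reflect[where g = g and a = t and b = t0] by simp
  with \<open>d > 0\<close> show ?thesis by blast
qed

section \<open>Arc-length parametrisation\<close>

lemma rectifiable_curve_length_finite:
  assumes "rectifiable_curve g" "0 \<le> a" "b \<le> 1"
  shows "length_wrt dist g a b < \<infinity>"
  using length_wrt_finite_subinterval[OF _ assms(2,3)] assms(1) unfolding rectifiable_curve_def by blast

lemma arclen_nonneg: "0 \<le> arclen g t"
  using curve_length_nonneg unfolding curve_length_def arclen_def .

lemma arclen_additive:
  assumes "rectifiable_curve g" "0 \<le> s" "s \<le> t" "t \<le> 1"
  shows "arclen g t = arclen g s + curve_length g s t"
  unfolding arclen_def curve_length_def[symmetric]
  using curve_length_additive[OF rectifiable_curve_length_finite[OF assms(1), of 0 t], of s] assms by simp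

lemma arclen_zero: "rectifiable_curve g \<Longrightarrow> arclen g 0 = 0"
  unfolding arclen_def curve_length_def[symmetric]
  using curve_length_refl[of g 0] rectifiable_curve_length_finite[of g 0 0] by simp

lemma continuous_on_arclen:
  fixes g :: "real \<Rightarrow> 'a::metric_space"
  assumes rc: "rectifiable_curve g"
  shows "continuous_on {0..1} (arclen g)"
  unfolding continuous_on_iff
proof (intro ballI allI impI)
  fix t0 e :: real assume t0: "t0 \<in> {0..1}" and e: "0 < e"
  have cont: "continuous_on {0..1} g" and fin: "length_wrt dist g 0 1 < \<infinity>"
    using rc unfolding rectifiable_curve_def by auto
  obtain dR where "dR > 0" and dR: "\<And>t. t0 \<le> t \<Longrightarrow> t < t0 + dR \<Longrightarrow> t \<le> 1 \<Longrightarrow> curve_length g t0 t < e"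
    using curve_length_right_small[OF cont fin _ _ e] t0 by auto
  obtain dL where "dL > 0" and dL: "\<And>t. t \<le> t0 \<Longrightarrow> t0 - dL < t \<Longrightarrow> 0 \<le> t \<Longrightarrow> curve_length g t t0 < e"
    using curve_length_left_small[OF cont fin _ _ e] t0 by auto
  have "dist (arclen g t) (arclen g t0) < e" if t: "t \<in> {0..1}" "dist t t0 < min dR dL" for t
  proof (cases "t0 \<le> t")
    case True
    then show ?thesis
      using arclen_additive[OF rc, of t0 t] dR[of t] curve_length_nonneg[of g t0 t] t t0
      by (auto simp: dist_real_def)
  next
    case False
    then show ?thesis
      using arclen_additive[OF rc, of t t0] dL[of t] curve_length_nonneg[of g t t0] t t0
      by (auto simp: dist_real_def)
  qed
  then show "\<exists>d>0. \<forall>t\<in>{0..1}. dist t t0 < d \<longrightarrow> dist (arclen g t) (arclen g t0) < e"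
    using \<open>dR > 0\<close> \<open>dL > 0\<close> by (intro exI[of _ "min dR dL"]) auto
qed

lemma arclen_surjective:
  assumes "rectifiable_curve g" "s \<in> {0..arclen g 1}"
  shows "\<exists>t\<in>{0..1}. arclen g t = s"
  using IVT'[of "arclen g" 0 s 1] continuous_on_arclen[OF assms(1)] arclen_zero[OF assms(1)] assms(2)
  by auto

lemma dist_le_arclen_diff:
  assumes rc: "rectifiable_curve g" and "t1 \<in> {0..1}" "t2 \<in> {0..1}"
  shows "dist (g t1) (g t2) \<le> \<bar>arclen g t1 - arclen g t2\<bar>"
proof -
  have *: "dist (g u) (g v) \<le> arclen g v - arclen g u" if "0 \<le> u" "u \<le> v" "v \<le> 1" for u v
    using arclen_additive[OF rc that] chord_le_curve_length[of g u v u v]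
      rectifiable_curve_length_finite[OF rc, of u v] that by simp
  show ?thesis
    using *[of t1 t2] *[of t2 t1] assms by (cases "t1 \<le> t2") (auto simp: dist_commute)
qed

lemma dist_le_arclen:
  assumes "rectifiable_curve g"
  shows "dist (g 0) (g 1) \<le> arclen g 1"
  using dist_le_arclen_diff[OF assms, of 0 1] arclen_zero[OF assms] arclen_nonneg[of g 1] by simp

lemma arc_param_eq:
  assumes "rectifiable_curve g" "s \<in> {0..arclen g 1}"
  shows "\<exists>t\<in>{0..1}. arclen g t = s \<and> arc_param g s = g t"
proof -
  have "\<exists>t. t \<in> {0..1} \<and> arclen g t = s" using arclen_surjective[OF assms] by blast
  then have "(SOME t. t \<in> {0..1} \<and> arclen g t = s) \<in> {0..1} \<and>
      arclen g (SOME t. t \<in> {0..1} \<and> arclen g t = s) = s"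
    by (rule someI_ex)
  then show ?thesis unfolding arc_param_def by blast
qed

lemma arc_param_lipschitz:
  assumes rc: "rectifiable_curve g" and "s1 \<in> {0..arclen g 1}" "s2 \<in> {0..arclen g 1}"
  shows "dist (arc_param g s1) (arc_param g s2) \<le> \<bar>s1 - s2\<bar>"
proof -
  obtain t1 where "t1 \<in> {0..1}" "arclen g t1 = s1" "arc_param g s1 = g t1"
    using arc_param_eq[OF rc assms(2)] by blast
  moreover obtain t2 where "t2 \<in> {0..1}" "arclen g t2 = s2" "arc_param g s2 = g t2"
    using arc_param_eq[OF rc assms(3)] by blast
  ultimately show ?thesis using dist_le_arclen_diff[OF rc, of t1 t2] by simp
qed

lemma dist_start_arc_param:
  assumes rc: "rectifiable_curve g" and s: "s \<in> {0..arclen g 1}"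
  shows "dist (g 0) (arc_param g s) \<le> s"
  using arc_param_eq[OF rc s] dist_le_arclen_diff[OF rc, of 0] arclen_zero[OF rc] s by force

lemma continuous_on_arc_param:
  assumes "rectifiable_curve g"
  shows "continuous_on {0..arclen g 1} (arc_param g)"
  by (rule lipschitz_on_continuous_on[of 1])
    (auto intro!: lipschitz_onI arc_param_lipschitz[OF assms] simp: dist_real_def)

section \<open>Estimates for the uniformized distance\<close>

lemma line_integral_nonneg:
  assumes "\<And>z. 0 \<le> \<rho> z"
  shows "0 \<le> line_integral \<rho> g"
  unfolding line_integral_def
proof (cases "(\<lambda>s. \<rho> (arc_param g s)) integrable_on {0..arclen g 1}")
  case True
  then show "0 \<le> integral {0..arclen g 1} (\<lambda>s. \<rho> (arc_param g s))"
    using assms by (intro integral_nonneg) auto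
qed (simp add: not_integrable_integral)

text \<open>During its first \<open>min r (arclen g 1)\<close> units of arc length the curve stays within \<open>r\<close> of
  \<open>g 0\<close>, where the integrand is at least \<open>exp (- \<epsilon> * (dist p (g 0) + r))\<close>.\<close>

lemma line_integral_exp_lower:
  fixes g :: "real \<Rightarrow> 'a::metric_space"
  assumes rc: "rectifiable_curve g" and "0 \<le> \<epsilon>" "0 < r"
  shows "exp (- \<epsilon> * (dist p (g 0) + r)) * min r (dist (g 0) (g 1))
           \<le> line_integral (\<lambda>z. exp (- \<epsilon> * dist p z)) g"
proof -
  define L where "L = arclen g 1"
  define f where "f = (\<lambda>s. exp (- \<epsilon> * dist p (arc_param g s)))"
  define c where "c = exp (- \<epsilon> * (dist p (g 0) + r))"
  define m where "m = min r L"
  have m: "0 \<le> m" "m \<le> L" unfolding m_def L_def using arclen_nonneg[of g 1] assms by auto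
  have int: "f integrable_on {0..L}"
    unfolding f_def L_def by (intro integrable_continuous_interval continuous_intros continuous_on_arc_param[OF rc])
  have int_m: "f integrable_on {0..m}" and int_mL: "f integrable_on {m..L}"
    using integrable_on_subinterval[OF int] m by auto
  have "m * c = integral {0..m} (\<lambda>_. c)" using m by simp
  also have "\<dots> \<le> integral {0..m} f"
  proof (rule integral_le[OF integrable_const_ivl int_m])
    fix s assume s: "s \<in> {0..m}"
    then have "dist (g 0) (arc_param g s) \<le> s" using dist_start_arc_param[OF rc] m unfolding L_def by auto
    then have "dist p (arc_param g s) \<le> dist p (g 0) + r"
      using dist_triangle[of p "arc_param g s" "g 0"] s m_def by auto
    then show "c \<le> f s" unfolding c_def f_def using assms by (simp add: mult_left_mono)
  qed
  also have "\<dots> \<le> integral {0..m} f + integral {m..L} f"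
    using integral_nonneg[OF int_mL] by (simp add: f_def)
  also have "\<dots> = integral {0..L} f" using Henstock_Kurzweil_Integration.integral_combine[OF m int] .
  finally have "m * c \<le> integral {0..L} f" .
  moreover have "min r (dist (g 0) (g 1)) \<le> m" unfolding m_def L_def using dist_le_arclen[OF rc] by auto
  moreover have "0 \<le> c" unfolding c_def by simp
  ultimately have "c * min r (dist (g 0) (g 1)) \<le> integral {0..L} f"
    by (metis mult.commute mult_right_mono order.trans)
  then show ?thesis unfolding c_def line_integral_def L_def f_def by simp
qed

lemma geodesic_seg_dist:
  "geodesic_seg g x y \<Longrightarrow> s \<in> {0..dist x y} \<Longrightarrow> t \<in> {0..dist x y} \<Longrightarrow> dist (g s) (g t) = \<bar>s - t\<bar>"
  unfolding geodesic_seg_def by blast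

lemma geodesic_seg_dist_start:
  "geodesic_seg g x y \<Longrightarrow> s \<in> {0..dist x y} \<Longrightarrow> dist x (g s) = s"
  using geodesic_seg_dist[of g x y 0 s] unfolding geodesic_seg_def by auto

lemma continuous_on_geodesic_seg: "geodesic_seg g x y \<Longrightarrow> continuous_on {0..dist x y} g"
  by (rule lipschitz_on_continuous_on[of 1])
    (auto intro!: lipschitz_onI simp: geodesic_seg_dist dist_real_def)

lemma polygonal_length_dilation:
  assumes c: "\<forall>s\<in>{0..1}. \<forall>t\<in>{0..1}. dist (c s) (c t) = D * \<bar>s - t\<bar>"
    and "sorted ts" "set ts \<subseteq> {0..1}" "ts \<noteq> []"
  shows "polygonal_length dist c ts = D * (last ts - hd ts)"
  using assms(2-)
proof (induction ts rule: induct_list012)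
  case (3 s t ts)
  then have "dist (c s) (c t) = D * (t - s)" using c by auto
  then show ?case using 3 by (simp add: algebra_simps)
qed auto

lemma length_wrt_dilation:
  assumes c: "\<forall>s\<in>{0..1}. \<forall>t\<in>{0..1}. dist (c s) (c t) = D * \<bar>s - t\<bar>" and "0 \<le> D" "t \<in> {0..1}"
  shows "length_wrt dist c 0 t = ereal (D * t)"
proof (rule antisym)
  show "length_wrt dist c 0 t \<le> ereal (D * t)"
    unfolding length_wrt_eq_SUP_polygonal_length
  proof (rule SUP_least, clarsimp)
    fix ts :: "real list" assume ts: "sorted ts" "set ts \<subseteq> {0..t}"
    show "polygonal_length dist c ts \<le> D * t"
    proof (cases "ts = []")
      case False
      then have "last ts \<in> {0..t}" "hd ts \<in> {0..t}" using ts(2) last_in_set hd_in_set by blast+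
      then have "last ts - hd ts \<le> t" by simp
      moreover have "set ts \<subseteq> {0..1}" using ts(2) assms(3) by auto
      ultimately show ?thesis
        using polygonal_length_dilation[OF c ts(1)] assms(2) False by (simp add: mult_left_mono)
    qed (use assms(2,3) in simp)
  qed
  show "ereal (D * t) \<le> length_wrt dist c 0 t"
    using chord_le_length_wrt[of 0 0 t t dist c] c assms by simp
qed

lemma rectifiable_curve_dilation:
  assumes c: "\<forall>s\<in>{0..1}. \<forall>t\<in>{0..1}. dist (c s) (c t) = D * \<bar>s - t\<bar>" and "0 \<le> D"
  shows "rectifiable_curve c"
proof -
  have "continuous_on {0..1} c"
    by (rule lipschitz_on_continuous_on[of D]) (use assms in \<open>auto intro!: lipschitz_onI simp: dist_real_def\<close>)
  then show ?thesis unfolding rectifiable_curve_def using length_wrt_dilation[OF assms] by simp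
qed

lemma geodesic_seg_rescaled:
  fixes g :: "real \<Rightarrow> 'a::metric_space"
  assumes geo: "geodesic_seg g x y"
  defines "c \<equiv> (\<lambda>t. g (dist x y * t))"
  shows "rectifiable_curve c" "c 0 = x" "c 1 = y"
    and "line_integral \<rho> c = integral {0..dist x y} (\<lambda>s. \<rho> (g s))"
proof -
  define D where "D = dist x y"
  have D: "0 \<le> D" unfolding D_def by simp
  have dil: "\<forall>s\<in>{0..1}. \<forall>t\<in>{0..1}. dist (c s) (c t) = D * \<bar>s - t\<bar>"
  proof (intro ballI)
    fix s t :: real assume "s \<in> {0..1}" "t \<in> {0..1}"
    then have "D * s \<in> {0..D}" "D * t \<in> {0..D}" using D by (auto simp: mult_left_le)
    then show "dist (c s) (c t) = D * \<bar>s - t\<bar>"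
      using geodesic_seg_dist[OF geo] D unfolding c_def D_def
      by (simp add: abs_mult flip: right_diff_distrib)
  qed
  show rc: "rectifiable_curve c" by (rule rectifiable_curve_dilation[OF dil D])
  show "c 0 = x" "c 1 = y" using geo unfolding c_def geodesic_seg_def by auto
  have arclen: "arclen c t = D * t" if "t \<in> {0..1}" for t
    unfolding arclen_def using length_wrt_dilation[OF dil D that] by simp
  have "arc_param c s = g s" if s: "s \<in> {0..D}" for s
  proof -
    obtain t where "t \<in> {0..1}" "arclen c t = s" "arc_param c s = c t"
      using arc_param_eq[OF rc, of s] s arclen[of 1] by auto
    then show ?thesis using arclen unfolding c_def D_def by simp
  qed
  then show "line_integral \<rho> c = integral {0..dist x y} (\<lambda>s. \<rho> (g s))"
    unfolding line_integral_def arclen[of 1, simplified] D_def[symmetric]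
    by (intro integral_cong) simp
qed

lemma unif_dist_le_integral_geodesic:
  assumes geo: "geodesic_seg g x y"
  shows "unif_dist \<epsilon> p x y \<le> integral {0..dist x y} (\<lambda>s. exp (- \<epsilon> * dist p (g s)))"
  unfolding unif_dist_def
proof (rule cINF_lower2)
  show "bdd_below ((\<lambda>\<gamma>. line_integral (\<lambda>z. exp (- \<epsilon> * dist p z)) \<gamma>) `
      {\<gamma>. rectifiable_curve \<gamma> \<and> \<gamma> 0 = x \<and> \<gamma> 1 = y})"
    by (rule bdd_belowI[of _ 0]) (auto intro: line_integral_nonneg)
  show "(\<lambda>t. g (dist x y * t)) \<in> {\<gamma>. rectifiable_curve \<gamma> \<and> \<gamma> 0 = x \<and> \<gamma> 1 = y}"
    using geodesic_seg_rescaled[OF geo] by auto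
qed (use geodesic_seg_rescaled(4)[OF geo] in simp)

lemma unif_dist_lower:
  assumes "geodesic_space TYPE('a::metric_space)" and "0 \<le> \<epsilon>" "0 < r"
  shows "exp (- \<epsilon> * (dist p x + r)) * min r (dist x y) \<le> unif_dist \<epsilon> p x (y::'a)"
  unfolding unif_dist_def
proof (rule cINF_greatest)
  obtain g where "geodesic_seg g x y" using assms(1) unfolding geodesic_space_def by blast
  then show "{\<gamma>. rectifiable_curve \<gamma> \<and> \<gamma> 0 = x \<and> \<gamma> 1 = y} \<noteq> {}"
    using geodesic_seg_rescaled by blast
qed (use line_integral_exp_lower assms(2,3) in fastforce)

lemma unif_dist_le_dist:
  assumes geo: "geodesic_seg g x y" and "0 \<le> \<epsilon>"
  shows "unif_dist \<epsilon> p x y \<le> dist x y"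
proof -
  have "integral {0..dist x y} (\<lambda>s. exp (- \<epsilon> * dist p (g s))) \<le> integral {0..dist x y} (\<lambda>s. 1)"
    using assms by (intro integral_le integrable_continuous_interval continuous_intros
        continuous_on_geodesic_seg[OF geo]) auto
  then show ?thesis using unif_dist_le_integral_geodesic[OF geo, of \<epsilon> p] by simp
qed

lemma unif_dist_le_exp:
  assumes geo: "geodesic_seg g x y" and "0 \<le> \<epsilon>"
  shows "unif_dist \<epsilon> p x y \<le> dist x y * exp (- \<epsilon> * (dist p x - dist x y))"
proof -
  define D where "D = dist x y"
  have "exp (- \<epsilon> * dist p (g s)) \<le> exp (- \<epsilon> * (dist p x - D))" if "s \<in> {0..D}" for s
  proof -
    have "dist p x - D \<le> dist p (g s)"
      using dist_triangle[of p x "g s"] geodesic_seg_dist_start[OF geo, of s] that unfolding D_def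
      by (auto simp: dist_commute)
    then show ?thesis using assms(2) by (simp add: mult_left_mono)
  qed
  then have "integral {0..D} (\<lambda>s. exp (- \<epsilon> * dist p (g s))) \<le> integral {0..D} (\<lambda>s. exp (- \<epsilon> * (dist p x - D)))"
    unfolding D_def by (intro integral_le integrable_continuous_interval continuous_intros
        continuous_on_geodesic_seg[OF geo]) auto
  then show ?thesis using unif_dist_le_integral_geodesic[OF geo, of \<epsilon> p] unfolding D_def by simp
qed

lemma integral_exp_le:
  fixes \<epsilon> a D :: real
  assumes "0 < \<epsilon>" "0 \<le> D"
  shows "integral {0..D} (\<lambda>s. exp (- \<epsilon> * (a + s))) \<le> exp (- \<epsilon> * a) / \<epsilon>"
proof -
  define F where "F = (\<lambda>s. - exp (- \<epsilon> * (a + s)) / \<epsilon>)"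
  have "((\<lambda>s. exp (- \<epsilon> * (a + s))) has_integral F D - F 0) {0..D}"
  proof (rule fundamental_theorem_of_calculus[OF assms(2)])
    fix s assume "s \<in> {0..D}"
    have "(F has_real_derivative exp (- \<epsilon> * (a + s))) (at s within {0..D})"
      unfolding F_def using assms(1) by (auto intro!: derivative_eq_intros simp: field_simps)
    then show "(F has_vector_derivative exp (- \<epsilon> * (a + s))) (at s within {0..D})"
      by (simp add: has_real_derivative_iff_has_vector_derivative)
  qed
  then have "integral {0..D} (\<lambda>s. exp (- \<epsilon> * (a + s))) = F D - F 0" by (rule integral_unique)
  also have "\<dots> \<le> exp (- \<epsilon> * a) / \<epsilon>" unfolding F_def using assms(1) by (simp add: divide_simps)
  finally show ?thesis .
qed

lemma geodesic_seg_shift: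
  assumes geo: "geodesic_seg g x y" and "0 \<le> a" "a \<le> b" "b \<le> dist x y"
  shows "geodesic_seg (\<lambda>s. g (a + s)) (g a) (g b)"
proof -
  have "dist (g a) (g b) = b - a" using geodesic_seg_dist[OF geo, of a b] assms by auto
  then show ?thesis unfolding geodesic_seg_def using geodesic_seg_dist[OF geo] assms by auto
qed

text \<open>Since \<open>d(p, g s) = s\<close>, the bound is the integral of \<open>exp (-\<epsilon> s)\<close> over \<open>[a, \<infinity>)\<close>.\<close>

lemma unif_dist_geodesic_tail:
  assumes geo: "geodesic_seg g p y" and "0 < \<epsilon>" and ab: "0 \<le> a" "a \<le> b" "b \<le> dist p y"
  shows "unif_dist \<epsilon> p (g a) (g b) \<le> exp (- \<epsilon> * a) / \<epsilon>"
proof -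
  have shift: "geodesic_seg (\<lambda>s. g (a + s)) (g a) (g b)" by (rule geodesic_seg_shift[OF geo ab])
  have "dist (g a) (g b) = b - a" using geodesic_seg_dist[OF geo, of a b] ab by auto
  then have "dist p (g (a + s)) = a + s" if "s \<in> {0..dist (g a) (g b)}" for s
    using geodesic_seg_dist_start[OF geo, of "a + s"] that ab by auto
  then have "integral {0..dist (g a) (g b)} (\<lambda>s. exp (- \<epsilon> * dist p (g (a + s))))
      = integral {0..dist (g a) (g b)} (\<lambda>s. exp (- \<epsilon> * (a + s)))"
    by (intro integral_cong) simp
  then show ?thesis
    using unif_dist_le_integral_geodesic[OF shift, of \<epsilon> p] integral_exp_le[OF assms(2), of "dist (g a) (g b)" a]
    by simp
qed

section \<open>Geodesic rays in hyperbolic spaces\<close>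

lemma geodesic_ray_dist: "geodesic_ray p \<gamma> \<Longrightarrow> 0 \<le> s \<Longrightarrow> 0 \<le> t \<Longrightarrow> dist (\<gamma> s) (\<gamma> t) = \<bar>s - t\<bar>"
  unfolding geodesic_ray_def by blast

lemma geodesic_ray_dist_base: "geodesic_ray p \<gamma> \<Longrightarrow> 0 \<le> s \<Longrightarrow> dist p (\<gamma> s) = s"
  using geodesic_ray_dist[of p \<gamma> 0 s] unfolding geodesic_ray_def by auto

lemma geodesic_seg_ray: "geodesic_ray p \<gamma> \<Longrightarrow> 0 \<le> b \<Longrightarrow> geodesic_seg \<gamma> p (\<gamma> b)"
  unfolding geodesic_seg_def using geodesic_ray_dist_base[of p \<gamma> b] geodesic_ray_dist[of p \<gamma>]
  by (auto simp: geodesic_ray_def)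

lemma equiv_ray_equiv: "equiv {\<gamma>. geodesic_ray p \<gamma>} (ray_equiv p)"
proof (rule equivI)
  show "ray_equiv p \<subseteq> {\<gamma>. geodesic_ray p \<gamma>} \<times> {\<gamma>. geodesic_ray p \<gamma>}"
    unfolding ray_equiv_def by auto
  show "refl_on {\<gamma>. geodesic_ray p \<gamma>} (ray_equiv p)"
    unfolding ray_equiv_def by (rule refl_onI) auto
  show "sym (ray_equiv p)"
    unfolding ray_equiv_def by (rule symI) (auto simp: dist_commute)
  show "trans (ray_equiv p)"
  proof (rule transI)
    fix \<alpha> \<beta> \<gamma> assume "(\<alpha>, \<beta>) \<in> ray_equiv p" "(\<beta>, \<gamma>) \<in> ray_equiv p"
    then obtain B1 B2 where rays: "geodesic_ray p \<alpha>" "geodesic_ray p \<gamma>"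
      and "\<forall>t\<ge>0. dist (\<alpha> t) (\<beta> t) \<le> B1" "\<forall>t\<ge>0. dist (\<beta> t) (\<gamma> t) \<le> B2"
      unfolding ray_equiv_def by auto
    then have "\<forall>t\<ge>0. dist (\<alpha> t) (\<gamma> t) \<le> B1 + B2"
      using dist_triangle[of "\<alpha> _" "\<gamma> _" "\<beta> _"] by (smt (verit))
    then show "(\<alpha>, \<gamma>) \<in> ray_equiv p" unfolding ray_equiv_def using rays by blast
  qed
qed

text \<open>The point of \<open>[x, y]\<close> at distance \<open>(p|y)\<^sub>x\<close> from \<open>x\<close> lies within \<open>(x|y)\<^sub>p + 2\<delta>\<close> of \<open>p\<close>.\<close>

lemma geodesic_seg_close_to_base:
  fixes p :: "'a::metric_space"
  assumes hyp: "\<forall>x y z q::'a. gromov_prod q x z \<ge> min (gromov_prod q x y) (gromov_prod q y z) - \<delta>"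
    and geo: "geodesic_seg g x y"
  shows "\<exists>s\<in>{0..dist x y}. dist p (g s) \<le> gromov_prod p x y + 2 * \<delta>"
proof -
  define s where "s = gromov_prod x p y"
  have s: "s \<in> {0..dist x y}" unfolding s_def gromov_prod_def
    using dist_triangle[of x y p] dist_triangle[of p y x] dist_triangle[of p x y] by (auto simp: dist_commute)
  have dxs: "dist x (g s) = s" using geodesic_seg_dist_start[OF geo s] .
  have "dist (g s) y = dist x y - s"
    using geodesic_seg_dist[OF geo s, of "dist x y"] geo s unfolding geodesic_seg_def by auto
  then have "gromov_prod x y (g s) = s" unfolding gromov_prod_def using dxs by (simp add: dist_commute)
  then have "gromov_prod x p (g s) \<ge> s - \<delta>"
    using hyp[rule_format, of x p y "g s"] unfolding s_def by simp
  then have "dist p (g s) \<le> gromov_prod p x y + 2 * \<delta>"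
    using dxs unfolding gromov_prod_def s_def by (simp add: dist_commute field_simps)
  then show ?thesis using s by blast
qed

lemma rays_close_below_gromov_prod:
  fixes p :: "'a::metric_space"
  assumes hyp: "\<forall>x y z q::'a. gromov_prod q x z \<ge> min (gromov_prod q x y) (gromov_prod q y z) - \<delta>"
    and r1: "geodesic_ray p \<gamma>1" and r2: "geodesic_ray p \<gamma>2" and ts: "0 \<le> t" "t \<le> s"
    and prod: "t \<le> gromov_prod p (\<gamma>1 s) (\<gamma>2 s)"
  shows "dist (\<gamma>1 t) (\<gamma>2 t) \<le> 4 * \<delta>"
proof -
  have "0 \<le> \<delta>" using hyp[rule_format, of p p p p] by (simp add: gromov_prod_def)
  have 1: "gromov_prod p (\<gamma>1 t) (\<gamma>1 s) = t" unfolding gromov_prod_def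
    using geodesic_ray_dist_base[OF r1] geodesic_ray_dist[OF r1, of t s] ts by simp
  have 2: "gromov_prod p (\<gamma>2 s) (\<gamma>2 t) = t" unfolding gromov_prod_def
    using geodesic_ray_dist_base[OF r2] geodesic_ray_dist[OF r2, of s t] ts by simp
  have "gromov_prod p (\<gamma>1 t) (\<gamma>2 s) \<ge> t - \<delta>"
    using hyp[rule_format, of p "\<gamma>1 t" "\<gamma>1 s" "\<gamma>2 s"] 1 prod by linarith
  then have "gromov_prod p (\<gamma>1 t) (\<gamma>2 t) \<ge> t - 2 * \<delta>"
    using hyp[rule_format, of p "\<gamma>1 t" "\<gamma>2 s" "\<gamma>2 t"] 2 \<open>0 \<le> \<delta>\<close> by linarith
  then show ?thesis
    unfolding gromov_prod_def using geodesic_ray_dist_base[OF r1] geodesic_ray_dist_base[OF r2] ts by simp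
qed

lemma compact_frequently_cluster_point:
  fixes f :: "nat \<Rightarrow> 'a::topological_space"
  assumes K: "compact K" and freq: "frequently (\<lambda>n. f n \<in> K) sequentially"
  shows "\<exists>y\<in>K. \<forall>U. open U \<longrightarrow> y \<in> U \<longrightarrow> frequently (\<lambda>n. f n \<in> U) sequentially"
proof -
  define F where "F = inf (filtermap f sequentially) (principal K)"
  have "F \<noteq> bot"
    using freq unfolding F_def frequently_def trivial_limit_def eventually_inf_principal eventually_filtermap
    by simp
  moreover have "eventually (\<lambda>x. x \<in> K) F" unfolding F_def eventually_inf_principal by simp
  ultimately obtain y where y: "y \<in> K" "inf (nhds y) F \<noteq> bot"
    using K unfolding compact_filter by blast
  have "frequently (\<lambda>n. f n \<in> U) sequentially" if U: "open U" "y \<in> U" for U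
  proof (rule ccontr)
    assume "\<not> frequently (\<lambda>n. f n \<in> U) sequentially"
    then have "eventually (\<lambda>x. x \<notin> U) F"
      unfolding F_def frequently_def eventually_inf_principal eventually_filtermap
      by (auto elim: eventually_mono)
    moreover have "eventually (\<lambda>x. x \<in> U) (nhds y)" using U by (rule eventually_nhds_in_open)
    ultimately have "eventually (\<lambda>x. False) (inf (nhds y) F)"
      unfolding eventually_inf by blast
    with y(2) show False by simp
  qed
  with y(1) show ?thesis by blast
qed

lemma pointwise_cluster_point:
  fixes f :: "nat \<Rightarrow> 'i \<Rightarrow> 'a::metric_space"
  assumes "\<And>i. compact (K i)" "\<And>n i. f n i \<in> K i"
  shows "\<exists>h. (\<forall>i. h i \<in> K i) \<and>
    (\<forall>i j \<eta>. 0 < \<eta> \<longrightarrow> frequently (\<lambda>n. dist (f n i) (h i) < \<eta> \<and> dist (f n j) (h j) < \<eta>) sequentially)"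
proof -
  have "compactin (product_topology (\<lambda>_. euclidean) UNIV) (PiE UNIV K)"
    unfolding compactin_PiE using assms(1) by simp
  then have compact: "compact (PiE UNIV K)" by (simp add: euclidean_product_topology)
  have "frequently (\<lambda>n. f n \<in> PiE UNIV K) sequentially"
    using assms(2) by (intro eventually_frequently always_eventually) auto
  from compact_frequently_cluster_point[OF compact this] obtain h where h: "h \<in> PiE UNIV K"
    and cl: "\<forall>U. open U \<longrightarrow> h \<in> U \<longrightarrow> frequently (\<lambda>n. f n \<in> U) sequentially"
    by (elim bexE)
  have open_coord: "open {k :: 'i \<Rightarrow> 'a. dist (k i) (h i) < \<eta>}" for i \<eta>
  proof (rule open_Collect_less)
    show "continuous_on UNIV (\<lambda>k :: 'i \<Rightarrow> 'a. dist (k i) (h i))"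
      by (intro continuous_on_dist continuous_on_product_coordinates continuous_on_const)
  qed (rule continuous_on_const)
  show ?thesis
  proof (intro exI[of _ h] conjI allI impI)
    show "h i \<in> K i" for i using h by (simp add: PiE_iff)
  next
    fix i j and \<eta> :: real assume "0 < \<eta>"
    have "open ({k. dist (k i) (h i) < \<eta>} \<inter> {k. dist (k j) (h j) < \<eta>})"
      by (intro open_Int open_coord)
    moreover have "h \<in> {k. dist (k i) (h i) < \<eta>} \<inter> {k. dist (k j) (h j) < \<eta>}" using \<open>0 < \<eta>\<close> by simp
    ultimately have "frequently (\<lambda>n. f n \<in> {k. dist (k i) (h i) < \<eta>} \<inter> {k. dist (k j) (h j) < \<eta>}) sequentially"
      using cl by blast
    then show "frequently (\<lambda>n. dist (f n i) (h i) < \<eta> \<and> dist (f n j) (h j) < \<eta>) sequentially" by simp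
  qed
qed

lemma dist_eq_if_approximated:
  assumes "\<And>e. 0 < e \<Longrightarrow> \<exists>x' y'. dist x x' < e \<and> dist y y' < e \<and> dist x' y' = c"
  shows "dist x y = c"
proof -
  have "\<bar>dist x y - c\<bar> \<le> 0 + e" if "0 < e" for e
  proof -
    obtain x' y' where "dist x x' < e / 2" "dist y y' < e / 2" "dist x' y' = c"
      using assms[of "e / 2"] \<open>0 < e\<close> by auto
    moreover have "dist x y \<le> dist x x' + dist x' y' + dist y y'"
      using dist_triangle[of x y x'] dist_triangle[of x' y y'] by (simp add: dist_commute)
    moreover have "dist x' y' \<le> dist x x' + dist x y + dist y y'"
      using dist_triangle[of x' y' x] dist_triangle[of x y' y] by (simp add: dist_commute)
    ultimately show ?thesis by linarith
  qed
  then show ?thesis using field_le_epsilon[of "\<bar>dist x y - c\<bar>" 0] by simp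
qed

lemma rays_gromov_prod_bounded:
  fixes p :: "'a::metric_space"
  assumes hyp: "\<forall>x y z q::'a. gromov_prod q x z \<ge> min (gromov_prod q x y) (gromov_prod q y z) - \<delta>"
    and r1: "geodesic_ray p \<gamma>1" and r2: "geodesic_ray p \<gamma>2"
    and unbounded: "\<nexists>B. \<forall>t\<ge>0. dist (\<gamma>1 t) (\<gamma>2 t) \<le> B"
  shows "\<exists>t0\<ge>0. \<forall>s\<ge>t0. gromov_prod p (\<gamma>1 s) (\<gamma>2 s) < t0"
proof -
  obtain t0 where t0: "0 \<le> t0" "4 * \<delta> < dist (\<gamma>1 t0) (\<gamma>2 t0)"
    using unbounded by (meson not_le)
  have "gromov_prod p (\<gamma>1 s) (\<gamma>2 s) < t0" if "t0 \<le> s" for s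
    using rays_close_below_gromov_prod[OF hyp r1 r2 t0(1) that] t0(2) by (meson not_le order.strict_trans2)
  with t0(1) show ?thesis by blast
qed

text \<open>The segment contains a unit subsegment within \<open>R + 1\<close> of \<open>p\<close>.\<close>

lemma length_wrt_unif_dist_lower:
  fixes p :: "'a::metric_space"
  assumes "geodesic_space TYPE('a)" "0 \<le> \<epsilon>" and geo: "geodesic_seg g x y" and D: "1 \<le> dist x y"
    and s: "s \<in> {0..dist x y}" "dist p (g s) \<le> R"
  shows "ereal (exp (- \<epsilon> * (R + 2))) \<le> length_wrt (unif_dist \<epsilon> p) g 0 (dist x y)"
proof -
  define a where "a = min s (dist x y - 1)"
  have a: "0 \<le> a" "a \<le> s" "s - a \<le> 1" "a + 1 \<le> dist x y" using s D unfolding a_def by auto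
  have unit: "dist (g a) (g (a + 1)) = 1" using geodesic_seg_dist[OF geo, of a "a + 1"] a by auto
  have "dist p (g a) \<le> dist p (g s) + dist (g s) (g a)" by (rule dist_triangle)
  also have "\<dots> \<le> R + 1" using s(2) geodesic_seg_dist[OF geo, of s a] s a by auto
  finally have "exp (- \<epsilon> * (R + 2)) \<le> exp (- \<epsilon> * (dist p (g a) + 1)) * min 1 (dist (g a) (g (a + 1)))"
    using unit assms(2) by (simp add: mult_left_mono)
  also have "\<dots> \<le> unif_dist \<epsilon> p (g a) (g (a + 1))" by (rule unif_dist_lower[OF assms(1,2)]) simp
  finally have "ereal (exp (- \<epsilon> * (R + 2))) \<le> ereal (unif_dist \<epsilon> p (g a) (g (a + 1)))" by simp
  also have "\<dots> \<le> length_wrt (unif_dist \<epsilon> p) g 0 (dist x y)" by (rule chord_le_length_wrt) (use a in auto)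
  finally show ?thesis .
qed

text \<open>An Arzela--Ascoli argument: the ray is a cluster point of the truncated segments in the
  topology of pointwise convergence (reached along a net, not necessarily a subsequence).\<close>

lemma geodesic_ray_limit_of_segments:
  fixes p :: "'a::metric_space"
  assumes proper: "\<And>r. compact (cball p r)" and geo: "\<And>n. geodesic_seg (g n) p (a n)"
    and far: "\<And>M. eventually (\<lambda>n. M < dist p (a n)) sequentially"
  shows "\<exists>\<gamma>. geodesic_ray p \<gamma> \<and> (\<forall>t\<ge>0. \<forall>\<eta>>0. frequently (\<lambda>n. dist (g n t) (\<gamma> t) < \<eta>) sequentially)"
proof -
  define \<sigma> where "\<sigma> = (\<lambda>n t. g n (max 0 (min t (dist p (a n)))))"
  have "\<sigma> n t \<in> cball p \<bar>t\<bar>" for n t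
    unfolding \<sigma>_def using geodesic_seg_dist_start[OF geo, of "max 0 (min t (dist p (a n)))" n] by auto
  from pointwise_cluster_point[of "\<lambda>t. cball p \<bar>t\<bar>" \<sigma>, OF proper this]
  obtain \<gamma> where \<gamma>: "\<forall>t. \<gamma> t \<in> cball p \<bar>t\<bar>" and cl: "\<forall>s t \<eta>. 0 < \<eta> \<longrightarrow>
      frequently (\<lambda>n. dist (\<sigma> n s) (\<gamma> s) < \<eta> \<and> dist (\<sigma> n t) (\<gamma> t) < \<eta>) sequentially"
    by (elim exE conjE)
  have close: "frequently (\<lambda>n. dist (g n s) (\<gamma> s) < \<eta> \<and> dist (g n t) (\<gamma> t) < \<eta> \<and>
      dist (g n s) (g n t) = \<bar>s - t\<bar>) sequentially" if "0 \<le> s" "0 \<le> t" "0 < \<eta>" for s t \<eta>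
  proof -
    have "frequently (\<lambda>n. (dist (\<sigma> n s) (\<gamma> s) < \<eta> \<and> dist (\<sigma> n t) (\<gamma> t) < \<eta>) \<and>
        max s t < dist p (a n)) sequentially"
      using frequently_eventually_frequently[OF cl[rule_format, OF that(3)] far] .
    then show ?thesis
      by (rule frequently_elim1) (use that geodesic_seg_dist[OF geo] in \<open>auto simp: \<sigma>_def\<close>)
  qed
  have "\<gamma> 0 = p" using \<gamma>[rule_format, of 0] by simp
  moreover have "dist (\<gamma> s) (\<gamma> t) = \<bar>s - t\<bar>" if st: "0 \<le> s" "0 \<le> t" for s t
  proof (rule dist_eq_if_approximated)
    fix e :: real assume "0 < e"
    obtain n where "dist (g n s) (\<gamma> s) < e" "dist (g n t) (\<gamma> t) < e" "dist (g n s) (g n t) = \<bar>s - t\<bar>"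
      using frequently_ex[OF close[OF st \<open>0 < e\<close>]] by blast
    then show "\<exists>x' y'. dist (\<gamma> s) x' < e \<and> dist (\<gamma> t) y' < e \<and> dist x' y' = \<bar>s - t\<bar>"
      by (metis dist_commute)
  qed
  ultimately have "geodesic_ray p \<gamma>" unfolding geodesic_ray_def by blast
  moreover have "frequently (\<lambda>n. dist (g n t) (\<gamma> t) < \<eta>) sequentially" if "0 \<le> t" "0 < \<eta>" for t \<eta>
    using close[OF that(1) that(1,2)] by (rule frequently_elim1) simp
  ultimately show ?thesis by blast
qed

lemma LIMSEQ_exp_neg_mult: "0 < \<epsilon> \<Longrightarrow> (\<lambda>k::nat. exp (- \<epsilon> * real k)) \<longlonglongrightarrow> 0"
proof -
  assume "0 < \<epsilon>"
  then have "(\<lambda>k::nat. exp (- \<epsilon>) ^ k) \<longlonglongrightarrow> 0" by (intro LIMSEQ_power_zero) simp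
  moreover have "exp (- \<epsilon> * real k) = exp (- \<epsilon>) ^ k" for k :: nat
    by (simp add: mult.commute flip: exp_of_nat_mult)
  ultimately show ?thesis by simp
qed

section \<open>The boundary map\<close>

locale uniformized_hyperbolic =
  fixes p :: "'a::metric_space" and \<delta> \<epsilon> :: real and \<iota> :: "'a \<Rightarrow> 'b::complete_space"
  assumes hyperbolic: "gromov_hyperbolic TYPE('a) \<delta>" and eps_pos: "\<epsilon> > 0"
    and iota_isometry: "\<forall>x y. dist (\<iota> x) (\<iota> y) = unif_dist \<epsilon> p x y"
begin

lemma geodesic_space: "geodesic_space TYPE('a)"
  using hyperbolic unfolding gromov_hyperbolic_def by blast

lemma geodesic_exists: "\<exists>g. geodesic_seg g (x::'a) y"
  using geodesic_space unfolding geodesic_space_def by blast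

lemma compact_cball: "compact (cball (x::'a) r)"
  using hyperbolic unfolding gromov_hyperbolic_def proper_space_def by blast

lemma four_point: "\<forall>x y z q::'a. gromov_prod q x z \<ge> min (gromov_prod q x y) (gromov_prod q y z) - \<delta>"
  using hyperbolic unfolding gromov_hyperbolic_def by blast

lemma dist_iota: "dist (\<iota> x) (\<iota> y) = unif_dist \<epsilon> p x y"
  using iota_isometry by blast

lemma dist_iota_le: "dist (\<iota> x) (\<iota> y) \<le> dist x y"
  using geodesic_exists[of x y] unif_dist_le_dist eps_pos by (metis dist_iota less_imp_le)

lemma dist_iota_le_exp: "dist (\<iota> x) (\<iota> y) \<le> dist x y * exp (- \<epsilon> * (dist p x - dist x y))"
  using geodesic_exists[of x y] unif_dist_le_exp eps_pos by (metis dist_iota less_imp_le)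

lemma dist_iota_lower: "0 < r \<Longrightarrow> exp (- \<epsilon> * (dist p x + r)) * min r (dist x y) \<le> dist (\<iota> x) (\<iota> y)"
  using unif_dist_lower[OF geodesic_space, of \<epsilon> r p x y] eps_pos by (simp add: dist_iota)

lemma dist_iota_ray_tail:
  assumes "geodesic_ray p \<gamma>" "0 \<le> a" "a \<le> b"
  shows "dist (\<iota> (\<gamma> a)) (\<iota> (\<gamma> b)) \<le> exp (- \<epsilon> * a) / \<epsilon>"
  using unif_dist_geodesic_tail[OF geodesic_seg_ray[OF assms(1), of b] eps_pos assms(2,3)]
    geodesic_ray_dist_base[OF assms(1), of b] assms(2,3) by (simp add: dist_iota)

lemma convergent_iota_ray:
  assumes "geodesic_ray p \<gamma>"
  shows "convergent (\<lambda>k::nat. \<iota> (\<gamma> (real k)))"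
proof -
  have "Cauchy (\<lambda>k::nat. \<iota> (\<gamma> (real k)))"
  proof (rule metric_CauchyI)
    fix e :: real assume "0 < e"
    then have "eventually (\<lambda>k. exp (- \<epsilon> * real k) < e * \<epsilon>) sequentially"
      using order_tendstoD(2)[OF LIMSEQ_exp_neg_mult[OF eps_pos]] eps_pos by simp
    then obtain N where N: "\<And>k. N \<le> k \<Longrightarrow> exp (- \<epsilon> * real k) < e * \<epsilon>"
      unfolding eventually_sequentially by blast
    have le: "dist (\<iota> (\<gamma> (real m))) (\<iota> (\<gamma> (real n))) < e" if "N \<le> m" "m \<le> n" for m n :: nat
    proof -
      have "dist (\<iota> (\<gamma> (real m))) (\<iota> (\<gamma> (real n))) \<le> exp (- \<epsilon> * real m) / \<epsilon>"
        using dist_iota_ray_tail[OF assms, of m n] that by simp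
      also have "\<dots> < e" using N[OF that(1)] eps_pos by (simp add: divide_simps mult.commute)
      finally show ?thesis .
    qed
    have "dist (\<iota> (\<gamma> (real m))) (\<iota> (\<gamma> (real n))) < e" if "N \<le> m" "N \<le> n" for m n :: nat
      using le[of m n] le[of n m] that by (cases "m \<le> n") (auto simp: dist_commute)
    then show "\<exists>N. \<forall>m\<ge>N. \<forall>n\<ge>N. dist (\<iota> (\<gamma> (real m))) (\<iota> (\<gamma> (real n))) < e" by blast
  qed
  then show ?thesis by (simp add: Cauchy_convergent_iff)
qed

lemma LIMSEQ_iota_ray_transfer:
  assumes r1: "geodesic_ray p \<gamma>1" and B: "\<forall>t\<ge>0. dist (\<gamma>1 t) (\<gamma>2 t) \<le> B"
    and lim: "(\<lambda>k::nat. \<iota> (\<gamma>1 (real k))) \<longlonglongrightarrow> x"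
  shows "(\<lambda>k::nat. \<iota> (\<gamma>2 (real k))) \<longlonglongrightarrow> x"
proof -
  have bound: "dist (\<iota> (\<gamma>2 (real k))) x \<le> B * exp (\<epsilon> * B) * exp (- \<epsilon> * real k) + dist (\<iota> (\<gamma>1 (real k))) x"
    for k :: nat
  proof -
    define d where "d = dist (\<gamma>1 (real k)) (\<gamma>2 (real k))"
    have d: "0 \<le> d" "d \<le> B" unfolding d_def using B by auto
    have "dist (\<iota> (\<gamma>1 (real k))) (\<iota> (\<gamma>2 (real k))) \<le> d * exp (- \<epsilon> * (real k - d))"
      using dist_iota_le_exp[of "\<gamma>1 (real k)" "\<gamma>2 (real k)"] geodesic_ray_dist_base[OF r1, of k]
      unfolding d_def by simp
    also have "\<dots> \<le> B * exp (- \<epsilon> * (real k - B))"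
      using d eps_pos by (intro mult_mono) (auto simp: mult_left_mono)
    also have "\<dots> = B * exp (\<epsilon> * B) * exp (- \<epsilon> * real k)" by (simp add: algebra_simps flip: exp_add)
    finally show ?thesis
      using dist_triangle[of "\<iota> (\<gamma>2 (real k))" x "\<iota> (\<gamma>1 (real k))"] by (simp add: dist_commute)
  qed
  have "(\<lambda>k. dist (\<iota> (\<gamma>2 (real k))) x) \<longlonglongrightarrow> 0"
  proof (rule Lim_null_comparison)
    show "eventually (\<lambda>k. norm (dist (\<iota> (\<gamma>2 (real k))) x)
        \<le> B * exp (\<epsilon> * B) * exp (- \<epsilon> * real k) + dist (\<iota> (\<gamma>1 (real k))) x) sequentially"
      using bound by (intro always_eventually) simp
    show "(\<lambda>k. B * exp (\<epsilon> * B) * exp (- \<epsilon> * real k) + dist (\<iota> (\<gamma>1 (real k))) x) \<longlonglongrightarrow> 0"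
      using tendsto_add[OF tendsto_mult_right_zero[OF LIMSEQ_exp_neg_mult[OF eps_pos]]
          tendsto_dist_iff[THEN iffD1, OF lim]] by simp
  qed
  then show ?thesis by (rule tendsto_dist_iff[THEN iffD2])
qed

lemma Phi_map_LIMSEQ:
  assumes C: "C \<in> gromov_boundary p" and "\<gamma> \<in> C"
  shows "geodesic_ray p \<gamma>" "(\<lambda>k::nat. \<iota> (\<gamma> (real k))) \<longlonglongrightarrow> Phi_map \<iota> C"
proof -
  define \<gamma>0 where "\<gamma>0 = (SOME \<gamma>. \<gamma> \<in> C)"
  have "\<gamma>0 \<in> C" unfolding \<gamma>0_def using \<open>\<gamma> \<in> C\<close> by (rule someI[where P = "\<lambda>\<gamma>. \<gamma> \<in> C"])
  then have "(\<gamma>0, \<gamma>) \<in> ray_equiv p"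
    using C \<open>\<gamma> \<in> C\<close> unfolding gromov_boundary_def by (intro in_quotient_imp_in_rel[OF equiv_ray_equiv]) auto
  then obtain B where r0: "geodesic_ray p \<gamma>0" and "geodesic_ray p \<gamma>" and B: "\<forall>t\<ge>0. dist (\<gamma>0 t) (\<gamma> t) \<le> B"
    unfolding ray_equiv_def by auto
  then show "geodesic_ray p \<gamma>" by simp
  have "(\<lambda>k::nat. \<iota> (\<gamma>0 (real k))) \<longlonglongrightarrow> Phi_map \<iota> C"
    using convergent_iota_ray[OF r0] unfolding Phi_map_def \<gamma>0_def[symmetric] by (simp add: convergent_LIMSEQ_iff)
  then show "(\<lambda>k::nat. \<iota> (\<gamma> (real k))) \<longlonglongrightarrow> Phi_map \<iota> C" by (rule LIMSEQ_iota_ray_transfer[OF r0 B])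
qed

lemma iota_ray_limit_in_metric_boundary:
  assumes r: "geodesic_ray p \<gamma>" and lim: "(\<lambda>k::nat. \<iota> (\<gamma> (real k))) \<longlonglongrightarrow> x"
  shows "x \<in> metric_boundary \<iota>"
proof -
  have "x \<in> closure (range \<iota>)"
    unfolding closure_sequential using lim by (intro exI[of _ "\<lambda>k. \<iota> (\<gamma> (real k))"]) auto
  moreover have "x \<noteq> \<iota> y" for y
  proof
    assume "x = \<iota> y"
    define c where "c = exp (- \<epsilon> * (dist p y + 1))"
    have "eventually (\<lambda>k. dist (\<iota> (\<gamma> (real k))) x < c) sequentially"
      using lim unfolding c_def by (rule tendstoD) simp
    moreover have "eventually (\<lambda>k. dist p y + 1 \<le> real k) sequentially"
      by (rule eventually_sequentiallyI[of "nat \<lceil>dist p y + 1\<rceil>"]) linarith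
    ultimately obtain k :: nat where k: "dist (\<iota> (\<gamma> (real k))) x < c" "dist p y + 1 \<le> real k"
      using eventually_happens'[OF sequentially_bot eventually_conj] by blast
    have "real k \<le> dist p y + dist y (\<gamma> (real k))"
      using dist_triangle[of p "\<gamma> (real k)" y] geodesic_ray_dist_base[OF r, of k] by simp
    then have "c \<le> dist (\<iota> y) (\<iota> (\<gamma> (real k)))"
      using dist_iota_lower[of 1 y "\<gamma> (real k)"] k(2) unfolding c_def by simp
    with k(1) \<open>x = \<iota> y\<close> show False by (simp add: dist_commute)
  qed
  ultimately show ?thesis unfolding metric_boundary_def by blast
qed

text \<open>Otherwise a cluster point \<open>y\<close> of the sequence in a compact ball would give \<open>x = \<iota> y\<close>,
  as \<open>\<iota>\<close> is \<open>1\<close>-Lipschitz.\<close>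

lemma metric_boundary_escapes:
  assumes x: "x \<in> metric_boundary \<iota>" and lim: "(\<lambda>n. \<iota> (a n)) \<longlonglongrightarrow> x"
  shows "eventually (\<lambda>n. M < dist p (a n)) sequentially"
proof (rule ccontr)
  assume "\<not> eventually (\<lambda>n. M < dist p (a n)) sequentially"
  then have "frequently (\<lambda>n. a n \<in> cball p M) sequentially"
    unfolding not_eventually by (simp add: not_less)
  from compact_frequently_cluster_point[OF compact_cball this]
  obtain y where y: "\<forall>U. open U \<longrightarrow> y \<in> U \<longrightarrow> frequently (\<lambda>n. a n \<in> U) sequentially"
    by (elim bexE)
  have "x \<noteq> \<iota> y" using x unfolding metric_boundary_def by auto
  then have e: "0 < dist (\<iota> y) x / 2" by simp
  have "frequently (\<lambda>n. a n \<in> ball y (dist (\<iota> y) x / 2)) sequentially"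
    using y[rule_format, of "ball y (dist (\<iota> y) x / 2)"] e by simp
  then have "frequently (\<lambda>n. a n \<in> ball y (dist (\<iota> y) x / 2) \<and> dist (\<iota> (a n)) x < dist (\<iota> y) x / 2) sequentially"
    using tendstoD[OF lim e] by (rule frequently_eventually_frequently)
  then obtain n where "dist y (a n) < dist (\<iota> y) x / 2" "dist (\<iota> (a n)) x < dist (\<iota> y) x / 2"
    by (auto dest: frequently_ex)
  then show False
    using dist_iota_le[of y "a n"] dist_triangle[of "\<iota> y" x "\<iota> (a n)"] by linarith
qed

lemma iota_ray_LIMSEQ_of_segments:
  assumes geo: "\<And>n. geodesic_seg (g n) p (a n)" and far: "\<And>M. eventually (\<lambda>n. M < dist p (a n)) sequentially"
    and lim: "(\<lambda>n. \<iota> (a n)) \<longlonglongrightarrow> x" and r: "geodesic_ray p \<gamma>"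
    and close: "\<forall>t\<ge>0. \<forall>\<eta>>0. frequently (\<lambda>n. dist (g n t) (\<gamma> t) < \<eta>) sequentially"
  shows "(\<lambda>k::nat. \<iota> (\<gamma> (real k))) \<longlonglongrightarrow> x"
proof -
  define A where "A = exp \<epsilon> + 1 / \<epsilon>"
  have bound: "dist (\<iota> (\<gamma> (real k))) x \<le> A * exp (- \<epsilon> * real k)" for k :: nat
  proof (rule field_le_epsilon)
    fix r :: real assume "0 < r"
    have "frequently (\<lambda>n. dist (g n (real k)) (\<gamma> (real k)) < 1 \<and>
        (dist (\<iota> (a n)) x < r \<and> real k < dist p (a n))) sequentially"
      using close \<open>0 < r\<close> by (intro frequently_eventually_frequently eventually_conj tendstoD[OF lim] far) auto
    then obtain n where n: "dist (g n (real k)) (\<gamma> (real k)) < 1" "dist (\<iota> (a n)) x < r" "real k < dist p (a n)"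
      by (auto dest: frequently_ex)
    define d where "d = dist (\<gamma> (real k)) (g n (real k))"
    have d: "0 \<le> d" "d \<le> 1" using n(1) unfolding d_def by (auto simp: dist_commute)
    have "dist (\<iota> (\<gamma> (real k))) (\<iota> (g n (real k))) \<le> d * exp (- \<epsilon> * (real k - d))"
      using dist_iota_le_exp[of "\<gamma> (real k)" "g n (real k)"] geodesic_ray_dist_base[OF r, of k]
      unfolding d_def by simp
    also have "\<dots> \<le> 1 * exp (- \<epsilon> * (real k - 1))"
      using d eps_pos by (intro mult_mono) (auto simp: mult_left_mono)
    also have "\<dots> = exp \<epsilon> * exp (- \<epsilon> * real k)" by (simp add: algebra_simps flip: exp_add)
    finally have 1: "dist (\<iota> (\<gamma> (real k))) (\<iota> (g n (real k))) \<le> exp \<epsilon> * exp (- \<epsilon> * real k)" .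
    have "g n (dist p (a n)) = a n" using geo[of n] unfolding geodesic_seg_def by simp
    then have 2: "dist (\<iota> (g n (real k))) (\<iota> (a n)) \<le> exp (- \<epsilon> * real k) / \<epsilon>"
      using unif_dist_geodesic_tail[OF geo[of n] eps_pos, of "real k" "dist p (a n)"] n(3) by (simp add: dist_iota)
    show "dist (\<iota> (\<gamma> (real k))) x \<le> A * exp (- \<epsilon> * real k) + r"
      using 1 2 n(2) dist_triangle[of "\<iota> (\<gamma> (real k))" x "\<iota> (g n (real k))"]
        dist_triangle[of "\<iota> (g n (real k))" x "\<iota> (a n)"] unfolding A_def by (simp add: algebra_simps)
  qed
  have "(\<lambda>k. dist (\<iota> (\<gamma> (real k))) x) \<longlonglongrightarrow> 0"
  proof (rule Lim_null_comparison)
    show "eventually (\<lambda>k. norm (dist (\<iota> (\<gamma> (real k))) x) \<le> A * exp (- \<epsilon> * real k)) sequentially"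
      using bound by (intro always_eventually) simp
    show "(\<lambda>k. A * exp (- \<epsilon> * real k)) \<longlonglongrightarrow> 0"
      by (rule tendsto_mult_right_zero[OF LIMSEQ_exp_neg_mult[OF eps_pos]])
  qed
  then show ?thesis by (rule tendsto_dist_iff[THEN iffD2])
qed

lemma metric_boundary_ray_limit:
  assumes x: "x \<in> metric_boundary \<iota>"
  shows "\<exists>\<gamma>. geodesic_ray p \<gamma> \<and> (\<lambda>k::nat. \<iota> (\<gamma> (real k))) \<longlonglongrightarrow> x"
proof -
  have "x \<in> closure (range \<iota>)" using x unfolding metric_boundary_def by blast
  then obtain xs where xs: "\<forall>n. xs n \<in> range \<iota>" "xs \<longlonglongrightarrow> x"
    unfolding closure_sequential by blast
  then have "\<forall>n. \<exists>b. xs n = \<iota> b" by auto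
  then obtain a where "\<And>n. xs n = \<iota> (a n)" by metis
  then have "xs = (\<lambda>n. \<iota> (a n))" by auto
  with xs(2) have lim: "(\<lambda>n. \<iota> (a n)) \<longlonglongrightarrow> x" by simp
  have far: "eventually (\<lambda>n. M < dist p (a n)) sequentially" for M
    using metric_boundary_escapes[OF x lim] .
  define g where "g = (\<lambda>n. SOME g. geodesic_seg g p (a n))"
  have geo: "geodesic_seg (g n) p (a n)" for n
    unfolding g_def using geodesic_exists[of p "a n"] by (rule someI_ex)
  from geodesic_ray_limit_of_segments[OF compact_cball geo far] obtain \<gamma> where r: "geodesic_ray p \<gamma>"
    and close: "\<forall>t\<ge>0. \<forall>\<eta>>0. frequently (\<lambda>n. dist (g n t) (\<gamma> t) < \<eta>) sequentially"
    by (elim exE conjE)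
  show ?thesis using r iota_ray_LIMSEQ_of_segments[OF geo far lim r close] by blast
qed

text \<open>If two rays with the same limit diverged, the geodesics between their points at time \<open>k\<close>
  would pass at bounded distance from \<open>p\<close> and so have \<open>d\<^sub>\<epsilon>\<close>-length bounded below, while the
  \<open>d\<^sub>\<epsilon>\<close>-distance of their endpoints tends to \<open>0\<close>; the Gehring--Hayman property forbids this.\<close>

lemma rays_bounded_dist_if_same_limit:
  assumes GH: "GH_property \<epsilon> p \<iota>" and r1: "geodesic_ray p \<gamma>1" and r2: "geodesic_ray p \<gamma>2"
    and l1: "(\<lambda>k::nat. \<iota> (\<gamma>1 (real k))) \<longlonglongrightarrow> x" and l2: "(\<lambda>k::nat. \<iota> (\<gamma>2 (real k))) \<longlonglongrightarrow> x"
  shows "\<exists>B. \<forall>t\<ge>0. dist (\<gamma>1 t) (\<gamma>2 t) \<le> B"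
proof (rule ccontr)
  assume "\<nexists>B. \<forall>t\<ge>0. dist (\<gamma>1 t) (\<gamma>2 t) \<le> B"
  then obtain t0 where prod: "\<forall>s\<ge>t0. gromov_prod p (\<gamma>1 s) (\<gamma>2 s) < t0"
    using rays_gromov_prod_bounded[OF four_point r1 r2] by blast
  define xs where "xs = (\<lambda>n. if even n then \<gamma>1 (real (n div 2)) else \<gamma>2 (real (n div 2)))"
  have "(\<lambda>n. \<iota> (xs n)) \<longlonglongrightarrow> x" by (rule limseq_even_odd) (simp_all add: xs_def l1 l2)
  then obtain C where "C \<ge> 1" and C: "\<And>n m g. geodesic_seg g (xs n) (xs m) \<Longrightarrow>
      length_wrt (unif_dist \<epsilon> p) g 0 (dist (xs n) (xs m)) \<le> ereal (C * unif_dist \<epsilon> p (xs n) (xs m))"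
    using GH iota_ray_limit_in_metric_boundary[OF r1 l1] unfolding GH_property_def by blast
  define c where "c = exp (- \<epsilon> * (t0 + 2 * \<delta> + 2))"
  have "0 < c / C" unfolding c_def using \<open>C \<ge> 1\<close> by simp
  then have "eventually (\<lambda>k. dist (\<iota> (\<gamma>1 (real k))) (\<iota> (\<gamma>2 (real k))) < c / C) sequentially"
    using tendstoD[OF tendsto_dist[OF l1 l2]] by simp
  moreover have "eventually (\<lambda>k. t0 + 1 \<le> real k) sequentially"
    by (rule eventually_sequentiallyI[of "nat \<lceil>t0 + 1\<rceil>"]) linarith
  ultimately obtain k :: nat where small: "dist (\<iota> (\<gamma>1 (real k))) (\<iota> (\<gamma>2 (real k))) < c / C"
    and k: "t0 + 1 \<le> real k"
    using eventually_happens'[OF sequentially_bot eventually_conj] by blast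
  have "gromov_prod p (\<gamma>1 (real k)) (\<gamma>2 (real k)) = real k - dist (\<gamma>1 (real k)) (\<gamma>2 (real k)) / 2"
    unfolding gromov_prod_def using geodesic_ray_dist_base[OF r1, of k] geodesic_ray_dist_base[OF r2, of k] by simp
  then have far: "1 \<le> dist (\<gamma>1 (real k)) (\<gamma>2 (real k))" using prod[rule_format, of "real k"] k by linarith
  obtain g where geo: "geodesic_seg g (\<gamma>1 (real k)) (\<gamma>2 (real k))" using geodesic_exists by blast
  from geodesic_seg_close_to_base[OF four_point geo, of p] obtain s
    where "s \<in> {0..dist (\<gamma>1 (real k)) (\<gamma>2 (real k))}"
      and "dist p (g s) \<le> gromov_prod p (\<gamma>1 (real k)) (\<gamma>2 (real k)) + 2 * \<delta>"
    by blast
  then have R: "dist p (g s) \<le> t0 + 2 * \<delta>" using prod[rule_format, of "real k"] k by linarith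
  have "ereal c \<le> length_wrt (unif_dist \<epsilon> p) g 0 (dist (\<gamma>1 (real k)) (\<gamma>2 (real k)))"
    unfolding c_def
    by (rule length_wrt_unif_dist_lower[OF geodesic_space less_imp_le[OF eps_pos] geo far \<open>s \<in> _\<close> R])
  also have "\<dots> \<le> ereal (C * dist (\<iota> (\<gamma>1 (real k))) (\<iota> (\<gamma>2 (real k))))"
    using C[of g "2 * k" "2 * k + 1"] geo by (simp add: xs_def dist_iota)
  finally have "c \<le> C * dist (\<iota> (\<gamma>1 (real k))) (\<iota> (\<gamma>2 (real k)))" by simp
  with small \<open>C \<ge> 1\<close> show False by (simp add: field_simps)
qed

lemma gromov_boundary_class_nonempty: "C \<in> gromov_boundary p \<Longrightarrow> \<exists>\<gamma>. \<gamma> \<in> C"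
  unfolding gromov_boundary_def using equiv_class_self[OF equiv_ray_equiv] by (auto elim!: quotientE)

lemma Phi_map_inj_on:
  assumes "GH_property \<epsilon> p \<iota>"
  shows "inj_on (Phi_map \<iota>) (gromov_boundary p)"
proof (rule inj_onI)
  fix C1 C2 assume C1: "C1 \<in> gromov_boundary p" and C2: "C2 \<in> gromov_boundary p"
    and eq: "Phi_map \<iota> C1 = Phi_map \<iota> C2"
  obtain \<gamma>1 \<gamma>2 where "\<gamma>1 \<in> C1" "\<gamma>2 \<in> C2" using gromov_boundary_class_nonempty C1 C2 by metis
  with Phi_map_LIMSEQ[OF C1] Phi_map_LIMSEQ[OF C2] eq obtain B
    where "geodesic_ray p \<gamma>1" "geodesic_ray p \<gamma>2" "\<forall>t\<ge>0. dist (\<gamma>1 t) (\<gamma>2 t) \<le> B"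
    using rays_bounded_dist_if_same_limit[OF assms] by metis
  then have "(\<gamma>1, \<gamma>2) \<in> ray_equiv p" unfolding ray_equiv_def by blast
  with C1 C2 \<open>\<gamma>1 \<in> C1\<close> \<open>\<gamma>2 \<in> C2\<close> show "C1 = C2"
    unfolding gromov_boundary_def using quotient_eq_iff[OF equiv_ray_equiv] by metis
qed

lemma Phi_map_image: "Phi_map \<iota> ` gromov_boundary p = metric_boundary \<iota>"
proof
  show "Phi_map \<iota> ` gromov_boundary p \<subseteq> metric_boundary \<iota>"
  proof
    fix y assume "y \<in> Phi_map \<iota> ` gromov_boundary p"
    then obtain C \<gamma> where "C \<in> gromov_boundary p" "\<gamma> \<in> C" "y = Phi_map \<iota> C"
      using gromov_boundary_class_nonempty by blast
    then show "y \<in> metric_boundary \<iota>"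
      using Phi_map_LIMSEQ iota_ray_limit_in_metric_boundary by metis
  qed
  show "metric_boundary \<iota> \<subseteq> Phi_map \<iota> ` gromov_boundary p"
  proof
    fix x assume "x \<in> metric_boundary \<iota>"
    then obtain \<gamma> where r: "geodesic_ray p \<gamma>" and lim: "(\<lambda>k::nat. \<iota> (\<gamma> (real k))) \<longlonglongrightarrow> x"
      using metric_boundary_ray_limit by blast
    define C where "C = ray_equiv p `` {\<gamma>}"
    have C: "C \<in> gromov_boundary p" unfolding C_def gromov_boundary_def by (rule quotientI) (use r in simp)
    have "\<gamma> \<in> C" unfolding C_def by (rule equiv_class_self[OF equiv_ray_equiv]) (use r in simp)
    then have "Phi_map \<iota> C = x" using LIMSEQ_unique[OF Phi_map_LIMSEQ(2)[OF C] lim] by blast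
    with C show "x \<in> Phi_map \<iota> ` gromov_boundary p" by blast
  qed
qed

end

theorem lemma3p2:
  fixes p :: "'a::metric_space" and \<delta> \<epsilon> :: real and \<iota> :: "'a \<Rightarrow> 'b::complete_space"
  assumes "gromov_hyperbolic TYPE('a) \<delta>"
    and "\<epsilon> > 0"
    and "\<forall>x y. dist (\<iota> x) (\<iota> y) = unif_dist \<epsilon> p x y"
    and "GH_property \<epsilon> p \<iota>"
  shows "bij_betw (Phi_map \<iota>) (gromov_boundary p) (metric_boundary \<iota>)"
proof -
  interpret uniformized_hyperbolic p \<delta> \<epsilon> \<iota> using assms(1-3) by unfold_locales
  show ?thesis unfolding bij_betw_def using Phi_map_inj_on[OF assms(4)] Phi_map_image by blast
qed

end
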